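(* Let $I\subseteq\mathbb K[x_1,\dots,x_n]$ be an $\mathfrak m$-primary monomial ideal generated in a single degree $d$ (so $\mu_i=x_i^d\in G(I)$ for all $i$), and let $J=\langle\mu_1,\dots,\mu_n\rangle$. The following are equivalent: (1) $I$ is Freiman, i.e. $|G(I^2)|=n|G(I)|-\binom n2$; (2) $I$ is very good; (3) $I^2=IJ$.
   Context: Let $\mathbb K$ be a field, $R=\mathbb K[x_1,\dots,x_n]$, $\mathfrak m=\langle x_1,\dots,x_n\rangle$, $\mathbb N=\{0,1,2,\dots\}$. A monomial $x_1^{\alpha_1}\cdots x_n^{\alpha_n}$ is identified with the point $(\alpha_1,\dots,\alpha_n)\in\mathbb N^n$. For a monomial ideal $I$, $G(I)$ denotes its (unique) minimal monomial generating set. An equigenerated monomial ideal $I$ with analytic spread $l(I)$ is called Freiman if $|G(I^2)|=l(I)|G(I)|-\binom{l(I)}{2}$; for $\mathfrak m$-primary $I$, $l(I)=n$. If $I$ is an $\mathfrak m$-primary monomial ideal, then for each $i$ there is a unique $d_i\ge1$ with $x_i^{d_i}\in G(I)$; write $\mu_i=x_i^{d_i}$. For $(a_1,\dots,a_n)\in\mathbb N^n$ the box associated to $I$ is $B_{a_1,\dots,a_n}=([a_1d_1,(a_1+1)d_1]\times\cdots\times[a_nd_n,(a_n+1)d_n])\cap\mathbb N^n$; a monomial belongs to a box if its exponent vector does. An $\mathfrak m$-primary monomial ideal $I$ is called good if for every integer $l\ge1$, every element of $G(I^l)$ belongs to some box $B_{a_1,\dots,a_n}$ with $a_1+\dots+a_n=l-1$.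 For a good ideal $I$ and $a\in\mathbb N^n$, with $l=a_1+\dots+a_n+1$, define $I_{a}=\left\langle \frac{m}{\mu_1^{a_1}\cdots\mu_n^{a_n}} : m\in B_{a}\cap G(I^l)\right\rangle$. A good ideal $I$ is called very good if $I_{a}=I$ for all $a\in\mathbb N^n$. *)

theory Defs
  imports Main
begin

text \<open>Monomials of K[x_0,...,x_{n-1}] are identified with exponent vectors
  a :: nat \<Rightarrow> nat with a i = 0 for i \<ge> n; a monomial ideal is identified with
  the set of exponent vectors of the monomials it contains (an up-closed set).
  Divisibility of monomials is the pointwise order on functions.\<close>

definition vecs :: "nat \<Rightarrow> (nat \<Rightarrow> nat) set" where
  "vecs n = {a. \<forall>i\<ge>n. a i = 0}"

definition mono_ideal :: "nat \<Rightarrow> (nat \<Rightarrow> nat) set \<Rightarrow> bool" where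
  "mono_ideal n I \<longleftrightarrow> I \<subseteq> vecs n \<and> (\<forall>a\<in>I. \<forall>b\<in>vecs n. a \<le> b \<longrightarrow> b \<in> I)"

definition gen :: "nat \<Rightarrow> (nat \<Rightarrow> nat) set \<Rightarrow> (nat \<Rightarrow> nat) set" where
  "gen n S = {c \<in> vecs n. \<exists>s\<in>S. s \<le> c}"

definition mingens :: "(nat \<Rightarrow> nat) set \<Rightarrow> (nat \<Rightarrow> nat) set" where
  "mingens I = {a \<in> I. \<forall>b\<in>I. b \<le> a \<longrightarrow> b = a}"

definition mprod :: "nat \<Rightarrow> (nat \<Rightarrow> nat) set \<Rightarrow> (nat \<Rightarrow> nat) set \<Rightarrow> (nat \<Rightarrow> nat) set" where
  "mprod n I J = gen n {(\<lambda>i. a i + b i) | a b. a \<in> I \<and> b \<in> J}"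

fun mpow :: "nat \<Rightarrow> (nat \<Rightarrow> nat) set \<Rightarrow> nat \<Rightarrow> (nat \<Rightarrow> nat) set" where
  "mpow n I 0 = vecs n"
| "mpow n I (Suc l) = mprod n (mpow n I l) I"

definition deg :: "nat \<Rightarrow> (nat \<Rightarrow> nat) \<Rightarrow> nat" where
  "deg n a = (\<Sum>i<n. a i)"

definition xpow :: "nat \<Rightarrow> nat \<Rightarrow> (nat \<Rightarrow> nat)" where
  "xpow i k = (\<lambda>j. if j = i then k else 0)"

definition m_primary :: "nat \<Rightarrow> (nat \<Rightarrow> nat) set \<Rightarrow> bool" where
  "m_primary n I \<longleftrightarrow> mono_ideal n I \<and> (\<lambda>_. 0) \<notin> I \<and> (\<forall>i<n. \<exists>k. xpow i k \<in> I)"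

definition equigenerated :: "nat \<Rightarrow> (nat \<Rightarrow> nat) set \<Rightarrow> nat \<Rightarrow> bool" where
  "equigenerated n I d \<longleftrightarrow> (\<forall>a\<in>mingens I. deg n a = d)"

definition dexp :: "(nat \<Rightarrow> nat) set \<Rightarrow> nat \<Rightarrow> nat" where
  "dexp I i = (THE k. k \<ge> 1 \<and> xpow i k \<in> mingens I)"

text \<open>mu^a = mu_1^{a_1} ... mu_n^{a_n}.\<close>
definition mupow :: "(nat \<Rightarrow> nat) set \<Rightarrow> (nat \<Rightarrow> nat) \<Rightarrow> (nat \<Rightarrow> nat)" where
  "mupow I a = (\<lambda>i. a i * dexp I i)"

definition box :: "nat \<Rightarrow> (nat \<Rightarrow> nat) set \<Rightarrow> (nat \<Rightarrow> nat) \<Rightarrow> (nat \<Rightarrow> nat) set" where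
  "box n I a = {v \<in> vecs n. \<forall>i<n. a i * dexp I i \<le> v i \<and> v i \<le> (a i + 1) * dexp I i}"

definition good :: "nat \<Rightarrow> (nat \<Rightarrow> nat) set \<Rightarrow> bool" where
  "good n I \<longleftrightarrow> m_primary n I \<and>
     (\<forall>l\<ge>1. \<forall>m\<in>mingens (mpow n I l). \<exists>a\<in>vecs n. deg n a = l - 1 \<and> m \<in> box n I a)"

definition Ia :: "nat \<Rightarrow> (nat \<Rightarrow> nat) set \<Rightarrow> (nat \<Rightarrow> nat) \<Rightarrow> (nat \<Rightarrow> nat) set" where
  "Ia n I a = gen n {(\<lambda>i. m i - mupow I a i) | m. m \<in> box n I a \<inter> mingens (mpow n I (deg n a + 1))}"

definition very_good :: "nat \<Rightarrow> (nat \<Rightarrow> nat) set \<Rightarrow> bool" where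
  "very_good n I \<longleftrightarrow> good n I \<and> (\<forall>a\<in>vecs n. Ia n I a = I)"

definition freiman_primary :: "nat \<Rightarrow> (nat \<Rightarrow> nat) set \<Rightarrow> bool" where
  "freiman_primary n I \<longleftrightarrow>
     int (card (mingens (mpow n I 2))) = int n * int (card (mingens I)) - int (n choose 2)"

end

theory Submission
  imports Defs "HOL-Library.Function_Algebras" "HOL-Library.Set_Algebras"
begin

text \<open>Write G = G(I) and V = {x_i^d | i < n}. As I is generated in degree d, G(I^l) is the l-fold
  sumset of G, so I is Freiman iff |G + G| = n|G| - C(n,2), and I^2 = IJ iff G + G = G + V.
  Counting gives |G + V| = n|G| - C(n,2) for every such I: G + V is the disjoint union of
  (G - V) + V, on which (a, i) \<mapsto> a + x_i^d is injective, and V + V, of size C(n+1,2).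
  Since G + V \<subseteq> G + G, conditions (1) and (3) both say G + G = G + V. Under this equation
  every generator of I^{l+1} has the form b + d\<cdot>a with b \<in> G and |a| = l; it lies in the box
  of a and yields I_a = I. Conversely, if I is very good, each generator m of I^2 lies in the
  box of some x_i, and m - x_i^d is then a generator of I.\<close>

section \<open>Exponent vectors and monomial ideals\<close>

definition smult :: "nat \<Rightarrow> (nat \<Rightarrow> nat) \<Rightarrow> (nat \<Rightarrow> nat)" where
  "smult d a = (\<lambda>i. d * a i)"

definition vecs_deg :: "nat \<Rightarrow> nat \<Rightarrow> (nat \<Rightarrow> nat) set" where
  "vecs_deg n k = {a \<in> vecs n. deg n a = k}"

definition pure_powers :: "nat \<Rightarrow> nat \<Rightarrow> (nat \<Rightarrow> nat) set" where
  "pure_powers n d = {xpow i d | i. i < n}"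

lemma vecs_add: "a \<in> vecs n \<Longrightarrow> b \<in> vecs n \<Longrightarrow> a + b \<in> vecs n"
  by (simp add: vecs_def)

lemma vecs_smult: "a \<in> vecs n \<Longrightarrow> smult d a \<in> vecs n"
  by (simp add: vecs_def smult_def)

lemma vecs_xpow: "i < n \<Longrightarrow> xpow i k \<in> vecs n"
  by (simp add: vecs_def xpow_def)

lemma deg_add: "deg n (a + b) = deg n a + deg n b"
  by (simp add: deg_def sum.distrib)

lemma deg_smult: "deg n (smult d a) = d * deg n a"
  by (simp add: deg_def smult_def sum_distrib_left)

lemma deg_xpow: "i < n \<Longrightarrow> deg n (xpow i k) = k"
  by (simp add: deg_def xpow_def)

lemma deg_diff: "b \<le> a \<Longrightarrow> deg n (a - b) = deg n a - deg n b"
  unfolding deg_def by (simp add: sum_subtractf_nat le_fun_def)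

lemma coord_le_deg: "i < n \<Longrightarrow> a i \<le> deg n a"
  unfolding deg_def by (rule member_le_sum) auto

lemma smult_add: "smult d (a + b) = smult d a + smult d b"
  by (auto simp: smult_def algebra_simps)

lemma smult_xpow: "smult d (xpow i k) = xpow i (d * k)"
  by (auto simp: smult_def xpow_def)

lemma deg_less:
  assumes "a \<in> vecs n" "b \<in> vecs n" "a \<le> b" "a \<noteq> b"
  shows "deg n a < deg n b"
proof -
  obtain i where "a i \<noteq> b i" using assms(4) by auto
  moreover have "i < n"
    using assms(1,2) calculation by (cases "i < n") (auto simp: vecs_def)
  ultimately show ?thesis unfolding deg_def
    using assms(3) by (intro sum_strict_mono_ex1) (auto simp: le_fun_def order_less_le)
qed

lemma eq_if_le_deg_eq:
  assumes "a \<in> vecs n" "b \<in> vecs n" "a \<le> b" "deg n a = deg n b"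
  shows "a = b"
  using deg_less[OF assms(1-3)] assms(4) by auto

lemma eq_xpow_if_deg_le_coord:
  assumes "a \<in> vecs n" "deg n a = d" "i < n" "d \<le> a i"
  shows "a = xpow i d"
proof -
  have "xpow i d \<le> a" using assms(4) by (auto simp: le_fun_def xpow_def)
  then show ?thesis using eq_if_le_deg_eq[OF vecs_xpow[OF assms(3)] assms(1)] assms(2,3)
    by (simp add: deg_xpow)
qed

lemma exists_pos_coord:
  assumes "deg n a \<noteq> 0"
  obtains i where "i < n" "0 < a i"
  using assms by (auto simp: deg_def)

lemma vecs_deg_0: "vecs_deg n 0 = {0}"
  by (auto simp: vecs_deg_def vecs_def deg_def fun_eq_iff) (metis lessThan_iff not_less)

lemma smult_vecs_deg: "smult d ` vecs_deg n k \<subseteq> vecs_deg n (d * k)"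
  by (auto simp: vecs_deg_def vecs_smult deg_smult)

lemma set_plus_vecs_deg:
  "S \<subseteq> vecs_deg n k \<Longrightarrow> T \<subseteq> vecs_deg n l \<Longrightarrow> S + T \<subseteq> vecs_deg n (k + l)"
  by (fastforce simp: vecs_deg_def deg_add intro: vecs_add elim!: set_plus_elim)

lemma finite_vecs_deg: "finite (vecs_deg n k)"
proof (rule finite_subset)
  show "vecs_deg n k \<subseteq> {a. \<forall>i. (i \<in> {..<n} \<longrightarrow> a i \<in> {..k}) \<and> (i \<notin> {..<n} \<longrightarrow> a i = 0)}"
    by (auto simp: vecs_deg_def vecs_def dest: coord_le_deg)
qed (rule finite_set_of_finite_funs; simp)

lemma exists_mingens_le:
  assumes "I \<subseteq> vecs n" "c \<in> I"
  shows "\<exists>a\<in>mingens I. a \<le> c"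
  using assms(2)
proof (induction "deg n c" arbitrary: c rule: less_induct)
  case less
  show ?case
  proof (cases "c \<in> mingens I")
    case False
    then obtain b where b: "b \<in> I" "b \<le> c" "b \<noteq> c" using less.prems by (auto simp: mingens_def)
    then have "deg n b < deg n c" using deg_less assms(1) less.prems by blast
    then show ?thesis using less.hyps b order_trans by blast
  qed auto
qed

lemma gen_mingens: "mono_ideal n I \<Longrightarrow> gen n (mingens I) = I"
  unfolding mono_ideal_def gen_def mingens_def
  using exists_mingens_le[of I n] by (auto simp: mingens_def)

lemma gen_zero: "gen n {0} = vecs n"
  by (auto simp: gen_def le_fun_def)

lemma mingens_gen_equideg:
  assumes "S \<subseteq> vecs_deg n k"
  shows "mingens (gen n S) = S"
proof -
  have "s = c" if "s \<in> S" "t \<in> S" "t \<le> c" "c \<le> s" for s t c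
    using eq_if_le_deg_eq[of t n s] that assms order_trans[OF that(3,4)] antisym
    by (auto simp: vecs_deg_def)
  then show ?thesis
    using assms by (auto simp: mingens_def gen_def vecs_deg_def)
qed

lemma mprod_gen:
  assumes "S \<subseteq> vecs n" "T \<subseteq> vecs n"
  shows "mprod n (gen n S) (gen n T) = gen n (S + T)"
proof
  show "gen n (S + T) \<subseteq> mprod n (gen n S) (gen n T)"
    using assms by (force simp: mprod_def gen_def set_plus_def plus_fun_def)
  show "mprod n (gen n S) (gen n T) \<subseteq> gen n (S + T)"
  proof
    fix c assume "c \<in> mprod n (gen n S) (gen n T)"
    then obtain a b s t where "c \<in> vecs n" "a + b \<le> c" "s \<in> S" "s \<le> a" "t \<in> T" "t \<le> b"
      by (auto simp: mprod_def gen_def plus_fun_def)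
    moreover have "s + t \<le> a + b" using calculation by (simp add: add_mono)
    ultimately show "c \<in> gen n (S + T)" unfolding gen_def using order_trans by blast
  qed
qed

section \<open>Sumsets with the pure powers\<close>

lemma pure_powers_vecs: "pure_powers n d \<subseteq> vecs n"
  by (auto simp: pure_powers_def vecs_xpow)

lemma pure_powers_vecs_deg: "pure_powers n d \<subseteq> vecs_deg n d"
  by (auto simp: pure_powers_def vecs_deg_def vecs_xpow deg_xpow)

lemma xpow_inj: "xpow i d = xpow j d \<Longrightarrow> 0 < d \<Longrightarrow> i = j"
  by (drule fun_cong[of _ _ i]) (auto simp: xpow_def split: if_splits)

lemma card_pure_powers: "0 < d \<Longrightarrow> card (pure_powers n d) = n"
proof -
  assume "0 < d"
  then have "inj_on (\<lambda>i. xpow i d) {..<n}" by (auto intro: inj_onI xpow_inj)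
  moreover have "pure_powers n d = (\<lambda>i. xpow i d) ` {..<n}" by (auto simp: pure_powers_def)
  ultimately show ?thesis by (simp add: card_image)
qed

lemma sum_Suc_lessThan_eq_choose: "(\<Sum>j<n. Suc j) = Suc n choose 2"
  by (induction n) (simp_all add: numeral_2_eq_2)

lemma xpow_pair_eq:
  assumes "0 < d" "i \<le> j" "i' \<le> j'" "xpow i d + xpow j d = xpow i' d + xpow j' d"
  shows "i = i' \<and> j = j'"
proof -
  have support: "{k. (xpow i d + xpow j d) k \<noteq> 0} = {i, j}" for i j
    using assms(1) by (auto simp: xpow_def)
  then have "{i, j} = {i', j'}" using assms(4) by metis
  then show ?thesis using assms(2,3) by (auto simp: doubleton_eq_iff)
qed

lemma card_pure_powers_plus_self:
  assumes "0 < d"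
  shows "card (pure_powers n d + pure_powers n d) = Suc n choose 2"
proof -
  let ?f = "\<lambda>(j, i). xpow i d + xpow j d"
  let ?T = "SIGMA j:{..<n}. {..j}"
  have "pure_powers n d + pure_powers n d = ?f ` ?T"
  proof
    show "?f ` ?T \<subseteq> pure_powers n d + pure_powers n d"
      by clarsimp (intro set_plus_intro; auto simp: pure_powers_def)
    show "pure_powers n d + pure_powers n d \<subseteq> ?f ` ?T"
    proof
      fix s assume "s \<in> pure_powers n d + pure_powers n d"
      then obtain i j where s: "s = xpow i d + xpow j d" "i < n" "j < n"
        by (auto simp: pure_powers_def elim!: set_plus_elim)
      show "s \<in> ?f ` ?T"
      proof (cases "i \<le> j")
        case True then show ?thesis using s by (auto intro!: image_eqI[of _ _ "(j, i)"])
      next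
        case False then show ?thesis using s by (auto simp: add.commute intro!: image_eqI[of _ _ "(i, j)"])
      qed
    qed
  qed
  moreover have "inj_on ?f ?T"
    using xpow_pair_eq[OF assms] by (auto intro!: inj_onI)
  ultimately have "card (pure_powers n d + pure_powers n d) = card ?T" by (simp add: card_image)
  then show ?thesis by (simp add: sum_Suc_lessThan_eq_choose)
qed

lemma eq_xpow_if_add_xpow_eq:
  assumes "a \<in> vecs_deg n d" "a + xpow i d = b + xpow j d" "i \<noteq> j" "j < n"
  shows "a = xpow j d"
proof -
  have "d \<le> a j" using fun_cong[OF assms(2), of j] assms(3) by (simp add: xpow_def)
  then show ?thesis using assms(1,4) eq_xpow_if_deg_le_coord by (auto simp: vecs_deg_def)
qed

lemma mem_pure_powers_if_add_mem:
  assumes "a \<in> vecs_deg n d" "i < n" "a + xpow i d \<in> pure_powers n d + pure_powers n d"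
  shows "a \<in> pure_powers n d"
proof -
  obtain j k where jk: "j < n" "k < n" "a + xpow i d = xpow j d + xpow k d"
    using assms(3) by (auto simp: pure_powers_def elim!: set_plus_elim)
  show ?thesis
  proof (cases "i = k")
    case True then show ?thesis using jk by (auto simp: pure_powers_def)
  next
    case False then show ?thesis using eq_xpow_if_add_xpow_eq[OF assms(1) jk(3)] jk
      by (auto simp: pure_powers_def)
  qed
qed

lemma card_plus_pure_powers:
  assumes "finite A" "A \<subseteq> vecs_deg n d" "0 < d" "pure_powers n d \<subseteq> A"
  shows "int (card (A + pure_powers n d)) = int n * int (card A) - int (n choose 2)"
proof -
  let ?V = "pure_powers n d" and ?B = "A - pure_powers n d"
  let ?g = "\<lambda>(a, i). a + xpow i d"
  have split: "A + ?V = (?B + ?V) \<union> (?V + ?V)"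
    using assms(4) by (auto simp: set_plus_def)
  have disjoint: "(?B + ?V) \<inter> (?V + ?V) = {}"
  proof -
    have "a + v \<notin> ?V + ?V" if a: "a \<in> ?B" and v: "v \<in> ?V" for a v
    proof -
      obtain i where "v = xpow i d" "i < n" using v by (auto simp: pure_powers_def)
      then show ?thesis using mem_pure_powers_if_add_mem[of a n d i] a assms(2) by auto
    qed
    then show ?thesis by (auto simp: set_plus_def)
  qed
  have "?B + ?V = ?g ` (?B \<times> {..<n})"
    by (auto simp: set_plus_def pure_powers_def)
  moreover have "inj_on ?g (?B \<times> {..<n})"
  proof (rule inj_onI, clarify)
    fix a i b j assume ab: "a \<in> A" "a \<notin> ?V" "b \<in> A" "b \<notin> ?V" "i < n" "j < n"
      and e: "a + xpow i d = b + xpow j d"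
    have "i = j"
      using eq_xpow_if_add_xpow_eq[OF _ e] ab assms(2) by (auto simp: pure_powers_def)
    then show "a = b \<and> i = j" using e by simp
  qed
  ultimately have card_B: "card (?B + ?V) = (card A - n) * n"
    using assms(1,3,4) by (simp add: card_image card_cartesian_product card_Diff_subset
        finite_subset card_pure_powers)
  have n_le: "n \<le> card A" using card_mono[OF assms(1,4)] card_pure_powers[OF assms(3)] by simp
  have "int (card (A + ?V)) = (int (card A) - int n) * int n + int (Suc n choose 2)"
    unfolding split using assms(1) card_B card_pure_powers_plus_self[OF assms(3)] disjoint n_le
    by (simp add: card_Un_disjoint finite_set_plus finite_subset[OF assms(4)])
  moreover have "int (Suc n choose 2) = int (n choose 2) + int n"
    by (simp add: numeral_2_eq_2)
  moreover have "2 * int (n choose 2) = int n * (int n - 1)"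
  proof -
    have "even (n * (n - 1))" by auto
    then have "2 * (n choose 2) = n * (n - 1)" by (simp add: choose_two)
    then have "2 * int (n choose 2) = int n * int (n - 1)" by (metis of_nat_mult of_nat_numeral)
    then show ?thesis by (cases n) auto
  qed
  ultimately show ?thesis by (simp add: algebra_simps)
qed

lemma add_xpow_vecs_deg: "a \<in> vecs_deg n k \<Longrightarrow> j < n \<Longrightarrow> a + xpow j 1 \<in> vecs_deg n (Suc k)"
  by (simp add: vecs_deg_def vecs_add vecs_xpow deg_add deg_xpow)

lemma vecs_deg_Suc_elim:
  assumes "a' \<in> vecs_deg n (Suc k)"
  obtains j a where "j < n" "a \<in> vecs_deg n k" "a' = a + xpow j 1"
proof -
  have "deg n a' \<noteq> 0" using assms by (simp add: vecs_deg_def)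
  then obtain j where j: "j < n" "0 < a' j" by (rule exists_pos_coord)
  define a where "a = a'(j := a' j - 1)"
  have a': "a' = a + xpow j 1" using j by (auto simp: a_def xpow_def)
  have "deg n a = k"
    using arg_cong[OF a', of "deg n"] assms j(1) by (simp add: vecs_deg_def deg_add deg_xpow)
  moreover have "a \<in> vecs n" using assms by (auto simp: vecs_deg_def vecs_def a_def)
  ultimately show thesis using that j a' by (simp add: vecs_deg_def)
qed

text \<open>Each sum of two elements of A trades one of its summands for a pure power.\<close>
lemma plus_smult_vecs_deg_Suc:
  assumes sq: "A + pure_powers n d = A + A" and V: "pure_powers n d \<subseteq> A"
  shows "(A + smult d ` vecs_deg n k) + A = A + smult d ` vecs_deg n (Suc k)"
proof
  show "(A + smult d ` vecs_deg n k) + A \<subseteq> A + smult d ` vecs_deg n (Suc k)"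
  proof
    fix x assume "x \<in> (A + smult d ` vecs_deg n k) + A"
    then obtain b a b' where x: "x = (b + smult d a) + b'" "b \<in> A" "a \<in> vecs_deg n k" "b' \<in> A"
      by (auto elim!: set_plus_elim)
    have "b + b' \<in> A + pure_powers n d" using sq x by auto
    then obtain b'' j where b'': "b + b' = b'' + xpow j d" "b'' \<in> A" "j < n"
      by (auto simp: pure_powers_def elim!: set_plus_elim)
    have "x = (b + b') + smult d a" using x(1) by (simp add: ac_simps)
    also have "\<dots> = b'' + smult d (a + xpow j 1)"
      using b''(1) by (simp add: smult_add smult_xpow ac_simps)
    finally show "x \<in> A + smult d ` vecs_deg n (Suc k)"
      using b''(2,3) x(3) add_xpow_vecs_deg by auto
  qed
  show "A + smult d ` vecs_deg n (Suc k) \<subseteq> (A + smult d ` vecs_deg n k) + A"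
  proof
    fix x assume "x \<in> A + smult d ` vecs_deg n (Suc k)"
    then obtain b a' where x: "x = b + smult d a'" "b \<in> A" "a' \<in> vecs_deg n (Suc k)"
      by (auto elim!: set_plus_elim)
    then obtain j a where a: "j < n" "a \<in> vecs_deg n k" "a' = a + xpow j 1"
      by (auto elim!: vecs_deg_Suc_elim)
    have "x = (b + smult d a) + xpow j d"
      using x(1) a(3) by (simp add: smult_add smult_xpow algebra_simps)
    moreover have "xpow j d \<in> A" using V a(1) by (auto simp: pure_powers_def)
    ultimately show "x \<in> (A + smult d ` vecs_deg n k) + A"
      using x(2) a(2) by auto
  qed
qed

section \<open>Equigenerated m-primary monomial ideals\<close>

locale equigenerated_m_primary =
  fixes n d :: nat and I :: "(nat \<Rightarrow> nat) set"
  assumes m_primary: "m_primary n I" and equigenerated: "equigenerated n I d"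
begin

abbreviation G where "G \<equiv> mingens I"

lemma I_mono_ideal: "mono_ideal n I"
  using m_primary by (simp add: m_primary_def)

lemma I_vecs: "I \<subseteq> vecs n"
  using I_mono_ideal by (simp add: mono_ideal_def)

lemma gen_G: "gen n G = I"
  using gen_mingens[OF I_mono_ideal] .

lemma G_vecs_deg: "G \<subseteq> vecs_deg n d"
  using I_mono_ideal equigenerated
  by (auto simp: mingens_def mono_ideal_def equigenerated_def vecs_deg_def)

lemma G_vecs: "G \<subseteq> vecs n"
  using G_vecs_deg by (auto simp: vecs_deg_def)

lemma finite_G: "finite G"
  using finite_subset[OF G_vecs_deg finite_vecs_deg] .

lemma xpow_mem_G: assumes "i < n" shows "xpow i d \<in> G"
proof -
  obtain k where "xpow i k \<in> I" using m_primary assms by (auto simp: m_primary_def)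
  then obtain a where a: "a \<in> G" "a \<le> xpow i k"
    using exists_mingens_le[OF I_vecs] by blast
  have "a = xpow i (a i)"
  proof
    fix j show "a j = xpow i (a i) j"
      using a(2) by (auto simp: le_fun_def xpow_def dest: spec[of _ j])
  qed
  moreover have "deg n a = d" using a(1) G_vecs_deg by (auto simp: vecs_deg_def)
  ultimately show ?thesis using a(1) deg_xpow[OF assms] by metis
qed

lemma pure_powers_subset_G: "pure_powers n d \<subseteq> G"
  by (auto simp: pure_powers_def xpow_mem_G)

lemma deg_pos: assumes "0 < n" shows "0 < d"
proof (rule ccontr)
  assume "\<not> 0 < d"
  then have "0 \<in> I" using xpow_mem_G[OF assms] by (auto simp: mingens_def xpow_def zero_fun_def)
  then show False using m_primary by (simp add: m_primary_def zero_fun_def)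
qed

lemma dexp_eq: assumes "i < n" shows "dexp I i = d"
  unfolding dexp_def
proof (rule the_equality)
  show "1 \<le> d \<and> xpow i d \<in> G" using deg_pos xpow_mem_G assms by simp
  show "k = d" if "1 \<le> k \<and> xpow i k \<in> G" for k
    using that G_vecs_deg deg_xpow[OF assms] by (auto simp: vecs_deg_def)
qed

lemma mupow_eq: assumes "a \<in> vecs n" shows "mupow I a = smult d a"
proof
  fix i show "mupow I a i = smult d a i"
    using assms by (cases "i < n") (auto simp: mupow_def smult_def vecs_def dexp_eq)
qed

lemma box_mem: assumes "b \<in> G" "a \<in> vecs n" shows "b + smult d a \<in> box n I a"
proof -
  have "b i \<le> d" if "i < n" for i
    using coord_le_deg[OF that, of b] assms(1) G_vecs_deg by (auto simp: vecs_deg_def)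
  then show ?thesis
    using assms G_vecs vecs_add vecs_smult by (auto simp: box_def dexp_eq smult_def algebra_simps)
qed

lemma mpow_Suc_0: "mpow n I (Suc 0) = I"
  using mprod_gen[of "{0}" n G] G_vecs gen_G by (simp add: gen_zero vecs_def)

lemma mpow_two: "mpow n I 2 = gen n (G + G)"
  using mpow_Suc_0 mprod_gen[OF G_vecs G_vecs] gen_G by (simp add: numeral_2_eq_2)

lemma mingens_mpow_two: "mingens (mpow n I 2) = G + G"
proof -
  have "G + G \<subseteq> vecs_deg n (d + d)"
    using set_plus_vecs_deg[OF G_vecs_deg G_vecs_deg] .
  then show ?thesis using mpow_two mingens_gen_equideg by simp
qed

lemma mpow_two_eq_iff:
  "mpow n I 2 = mprod n I (gen n (pure_powers n d)) \<longleftrightarrow> G + pure_powers n d = G + G"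
proof -
  have "mingens (gen n (G + pure_powers n d)) = G + pure_powers n d"
    using set_plus_vecs_deg[OF G_vecs_deg pure_powers_vecs_deg] by (rule mingens_gen_equideg)
  moreover have "mingens (gen n (G + G)) = G + G"
    using set_plus_vecs_deg[OF G_vecs_deg G_vecs_deg] by (rule mingens_gen_equideg)
  moreover have "mprod n I (gen n (pure_powers n d)) = gen n (G + pure_powers n d)"
    using mprod_gen[OF G_vecs pure_powers_vecs] gen_G by simp
  ultimately show ?thesis
    unfolding mpow_two by metis
qed

lemma card_plus_pure_powers_G:
  "int (card (G + pure_powers n d)) = int n * int (card G) - int (n choose 2)"
proof (cases "n = 0")
  case True then show ?thesis by (simp add: pure_powers_def)
next
  case False
  then have "0 < d" by (simp add: deg_pos)
  then show ?thesis by (rule card_plus_pure_powers[OF finite_G G_vecs_deg _ pure_powers_subset_G])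
qed

lemma freiman_iff: "freiman_primary n I \<longleftrightarrow> G + pure_powers n d = G + G"
proof -
  have "G + pure_powers n d \<subseteq> G + G" using pure_powers_subset_G by (auto simp: set_plus_def)
  moreover have "finite (G + G)" using finite_G by (simp add: finite_set_plus)
  ultimately have "card (G + G) = card (G + pure_powers n d) \<longleftrightarrow> G + pure_powers n d = G + G"
    using card_subset_eq by (metis (no_types))
  then show ?thesis
    unfolding freiman_primary_def mingens_mpow_two card_plus_pure_powers_G[symmetric] by simp
qed

lemma mem_G_if_deg: assumes "c \<in> I" "deg n c = d" shows "c \<in> G"
proof -
  obtain b where "b \<in> G" "b \<le> c" using exists_mingens_le[OF I_vecs assms(1)] by blast
  moreover have "b \<in> vecs_deg n d" using G_vecs_deg calculation(1) by blast
  moreover have "c \<in> vecs n" using I_vecs assms(1) by blast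
  ultimately have "b = c" using eq_if_le_deg_eq[of b n c] assms(2) by (simp add: vecs_deg_def)
  then show ?thesis using \<open>b \<in> G\<close> by simp
qed

lemma smult_le_if_mem_box: "a \<in> vecs n \<Longrightarrow> m \<in> box n I a \<Longrightarrow> smult d a \<le> m"
  unfolding le_fun_def
proof
  fix i assume "a \<in> vecs n" "m \<in> box n I a"
  then show "smult d a i \<le> m i"
    by (cases "i < n") (auto simp: box_def smult_def vecs_def dexp_eq mult.commute)
qed

context
  assumes sumset_eq: "G + pure_powers n d = G + G"
begin

lemma mpow_Suc_eq: "mpow n I (Suc k) = gen n (G + smult d ` vecs_deg n k)"
proof (induction k)
  case 0
  have "smult d ` vecs_deg n 0 = {0}" by (simp add: vecs_deg_0 smult_def zero_fun_def)
  then show ?case using mpow_Suc_0 gen_G by simp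
next
  case (Suc k)
  have vecs: "G + smult d ` vecs_deg n k \<subseteq> vecs n"
    using set_plus_vecs_deg[OF G_vecs_deg smult_vecs_deg] by (auto simp: vecs_deg_def)
  have "mpow n I (Suc (Suc k)) = mprod n (gen n (G + smult d ` vecs_deg n k)) (gen n G)"
    using Suc gen_G by simp
  also have "\<dots> = gen n ((G + smult d ` vecs_deg n k) + G)"
    using vecs G_vecs by (rule mprod_gen)
  also have "\<dots> = gen n (G + smult d ` vecs_deg n (Suc k))"
    using plus_smult_vecs_deg_Suc[OF sumset_eq pure_powers_subset_G] by simp
  finally show ?case .
qed

lemma mingens_mpow_Suc: "mingens (mpow n I (Suc k)) = G + smult d ` vecs_deg n k"
  unfolding mpow_Suc_eq
  using set_plus_vecs_deg[OF G_vecs_deg smult_vecs_deg] by (rule mingens_gen_equideg)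

lemma good_if_sumset_eq: "good n I"
  unfolding good_def
proof (intro conjI allI impI ballI)
  fix l m assume "1 \<le> l" "m \<in> mingens (mpow n I l)"
  then obtain b a where "m = b + smult d a" "b \<in> G" "a \<in> vecs_deg n (l - 1)"
    using mingens_mpow_Suc[of "l - 1"] by (auto elim!: set_plus_elim)
  then show "\<exists>a\<in>vecs n. deg n a = l - 1 \<and> m \<in> box n I a"
    using box_mem by (auto simp: vecs_deg_def)
qed (rule m_primary)

text \<open>If a' overshoots a in some coordinate i, the difference has degree d and is divisible
  by x_i^d, hence equals x_i^d.\<close>
lemma diff_smult_mem_G:
  assumes "b \<in> G" "a \<in> vecs n" "a' \<in> vecs_deg n (deg n a)" "smult d a \<le> b + smult d a'"
  shows "(b + smult d a') - smult d a \<in> G"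
proof (cases "a' \<le> a")
  case True
  then have "a' = a" using eq_if_le_deg_eq assms(2,3) by (auto simp: vecs_deg_def)
  then show ?thesis using assms(1) by (simp add: fun_diff_def)
next
  case False
  then obtain i where i: "a i < a' i" by (auto simp: le_fun_def not_le)
  then have "i < n" using assms(3) by (cases "i < n") (auto simp: vecs_deg_def vecs_def)
  let ?c = "(b + smult d a') - smult d a"
  have "b \<in> vecs n" using G_vecs assms(1) by blast
  then have "?c \<in> vecs n" using assms(3) by (simp add: vecs_def vecs_deg_def fun_diff_def smult_def)
  moreover have "deg n ?c = d"
    using assms G_vecs_deg by (auto simp: deg_diff deg_add deg_smult vecs_deg_def)
  moreover have "d \<le> ?c i"
  proof -
    have "d * (a i + 1) \<le> d * a' i" using i by (intro mult_le_mono2) simp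
    then show ?thesis by (simp add: fun_diff_def smult_def algebra_simps)
  qed
  ultimately have "?c = xpow i d" using \<open>i < n\<close> by (intro eq_xpow_if_deg_le_coord)
  then show ?thesis using xpow_mem_G[OF \<open>i < n\<close>] by simp
qed

lemma Ia_eq_self: assumes a: "a \<in> vecs n" shows "Ia n I a = I"
proof -
  let ?M = "box n I a \<inter> mingens (mpow n I (deg n a + 1))"
  have M: "?M = box n I a \<inter> (G + smult d ` vecs_deg n (deg n a))"
    using mingens_mpow_Suc by simp
  have "{m - mupow I a | m. m \<in> ?M} = G"
  proof
    show "{m - mupow I a | m. m \<in> ?M} \<subseteq> G"
      using diff_smult_mem_G smult_le_if_mem_box a unfolding M mupow_eq[OF a]
      by (fastforce elim!: set_plus_elim)
    show "G \<subseteq> {m - mupow I a | m. m \<in> ?M}"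
    proof
      fix b assume b: "b \<in> G"
      have "b + smult d a \<in> ?M"
        unfolding M using box_mem[OF b a] b a by (auto simp: vecs_deg_def)
      moreover have "b = (b + smult d a) - mupow I a"
        by (simp add: mupow_eq[OF a] fun_diff_def)
      ultimately show "b \<in> {m - mupow I a | m. m \<in> ?M}" by blast
    qed
  qed
  then show ?thesis by (simp add: Ia_def fun_diff_def gen_G)
qed

lemma very_good_if_sumset_eq: "very_good n I"
  unfolding very_good_def using good_if_sumset_eq Ia_eq_self by blast

end

lemma sumset_eq_if_very_good:
  assumes vg: "very_good n I"
  shows "G + pure_powers n d = G + G"
proof
  show "G + pure_powers n d \<subseteq> G + G" using pure_powers_subset_G by (auto simp: set_plus_def)
  show "G + G \<subseteq> G + pure_powers n d"
  proof
    fix m assume "m \<in> G + G"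
    then have m: "m \<in> mingens (mpow n I 2)" "m \<in> vecs_deg n (d + d)"
      using mingens_mpow_two set_plus_vecs_deg[OF G_vecs_deg G_vecs_deg] by auto
    have "\<exists>a\<in>vecs n. deg n a = 2 - 1 \<and> m \<in> box n I a"
      using vg m(1) one_le_numeral unfolding very_good_def good_def by blast
    then obtain a where a: "a \<in> vecs n" "deg n a = 1" "m \<in> box n I a" by auto
    then have "deg n a \<noteq> 0" by simp
    then obtain i where i: "i < n" "0 < a i" by (rule exists_pos_coord)
    have "a = xpow i 1" using eq_xpow_if_deg_le_coord a(1,2) i by simp
    then have mu: "mupow I a = xpow i d" using mupow_eq[OF a(1)] by (simp add: smult_xpow)
    have "m \<in> box n I a \<inter> mingens (mpow n I (deg n a + 1))"
      using a(3) m(1) unfolding a(2) one_add_one by blast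
    moreover have "m - mupow I a \<in> vecs n" using m(2) by (simp add: vecs_deg_def vecs_def fun_diff_def)
    ultimately have "m - mupow I a \<in> Ia n I a" unfolding Ia_def gen_def fun_diff_def by blast
    then have "m - xpow i d \<in> I" using vg a(1) mu by (simp add: very_good_def)
    have le: "xpow i d \<le> m" using smult_le_if_mem_box[OF a(1,3)] mu a(1) by (simp add: mupow_eq)
    have "deg n (m - xpow i d) = d" using m(2) i(1) by (simp add: deg_diff[OF le] deg_xpow vecs_deg_def)
    with \<open>m - xpow i d \<in> I\<close> have "m - xpow i d \<in> G" by (rule mem_G_if_deg)
    moreover have "m = (m - xpow i d) + xpow i d" using le by (simp add: fun_eq_iff le_fun_def fun_diff_def)
    ultimately show "m \<in> G + pure_powers n d" using i(1) by (auto simp: pure_powers_def set_plus_def)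
  qed
qed

end

theorem mainTheorem20:
  fixes n d :: nat and I :: "(nat \<Rightarrow> nat) set"
  assumes "m_primary n I"
    and "equigenerated n I d"
  defines "J \<equiv> gen n {xpow i d | i. i < n}"
  shows "(freiman_primary n I \<longleftrightarrow> very_good n I) \<and>
         (very_good n I \<longleftrightarrow> mpow n I 2 = mprod n I J)"
proof -
  interpret equigenerated_m_primary n d I using assms(1,2) by unfold_locales
  have "very_good n I \<longleftrightarrow> G + pure_powers n d = G + G"
    using very_good_if_sumset_eq sumset_eq_if_very_good by blast
  moreover have "J = gen n (pure_powers n d)" by (simp add: J_def pure_powers_def)
  ultimately show ?thesis using freiman_iff mpow_two_eq_iff by simp
qed

end
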